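(* Let $\lambda\in\mathcal P_\epsilon(N)$ and let $\mathbf i$ be an admissible sequence for $\lambda$. Then $\Delta(\lambda^{\mathbf i})\subseteq\Delta(\lambda)$. Moreover, if $\lambda$ is non-singular then $\lambda^{\mathbf i}$ is non-singular.
   Context: $\mathcal P_\epsilon(N)$ ($\epsilon=\pm1$) is the set of partitions $\lambda=(\lambda_1\ge\dots\ge\lambda_n\ge1)$ of $N$ in which every part $m$ with $\epsilon(-1)^m=1$ occurs with even multiplicity; conventions $\lambda_0=0$, $\lambda_i=0$ for $i>n$. A 2-step of $\lambda$ is a pair $(i,i+1)$, $1\le i<n$, with $\epsilon(-1)^{\lambda_i}=\epsilon(-1)^{\lambda_{i+1}}=-1$, $\lambda_{i-1}\ne\lambda_i$, $\lambda_{i+1}\ne\lambda_{i+2}$; $\Delta(\lambda)$ is the set of 2-steps. A 2-step $(i,i+1)$ is bad if ($i>1$ and $\lambda_{i-1}-\lambda_i$ is even) or $\lambda_{i+1}-\lambda_{i+2}$ is even, good otherwise; $\lambda$ is non-singular if all its 2-steps are good. Kempken–Spaltenstein (KS) algorithm: for $1\le i\le n$, Case 1 occurs at $i$ if $\lambda_i\ge\lambda_{i+1}+2$, and then $\lambda^{(i)}=(\lambda_1-2,\dots,\lambda_i-2,\lambda_{i+1},\dots,\lambda_n)$; Case 2 occurs at $i$ if $(i,i+1)\in\Delta(\lambda)$ and $\lambda_i=\lambda_{i+1}$, and then $\lambda^{(i)}=(\lambda_1-2,\dots,\lambda_{i-1}-2,\lambda_i-1,\lambda_{i+1}-1,\lambda_{i+2},\dots,\lambda_n)$;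 zero parts are discarded and $\lambda^{(i)}\in\mathcal P_\epsilon(N-2i)$. Index $i$ is admissible for $\lambda$ if Case 1 or Case 2 occurs at $i$. A sequence $\mathbf i=(i_1,\dots,i_l)$ is admissible for $\lambda$ if each $i_k$ is admissible for $\lambda^{(i_1,\dots,i_{k-1})}$, where $\lambda^{\emptyset}=\lambda$ and $\lambda^{(i_1,\dots,i_k)}=(\lambda^{(i_1,\dots,i_{k-1})})^{(i_k)}$; write $\lambda^{\mathbf i}=\lambda^{(i_1,\dots,i_l)}$. *)

theory Defs
  imports Main
begin

text \<open>A partition is a list of positive naturals in nonincreasing order.
  Parts are indexed from 1; lambda_0 = 0 and lambda_i = 0 for i > n.\<close>

definition part :: "nat list \<Rightarrow> nat \<Rightarrow> nat" where
  "part lam i = (if 1 \<le> i \<and> i \<le> length lam then lam ! (i - 1) else 0)"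

definition sgn_par :: "int \<Rightarrow> nat \<Rightarrow> int" where
  "sgn_par eps m = eps * (-1) ^ m"

definition P_eps :: "int \<Rightarrow> nat \<Rightarrow> nat list \<Rightarrow> bool" where
  "P_eps eps N lam \<longleftrightarrow>
     sorted_wrt (\<ge>) lam \<and> (\<forall>x \<in> set lam. x \<ge> 1) \<and> sum_list lam = N \<and>
     (\<forall>m. sgn_par eps m = 1 \<longrightarrow> even (count_list lam m))"

definition two_steps :: "int \<Rightarrow> nat list \<Rightarrow> nat set" where
  "two_steps eps lam = {i. 1 \<le> i \<and> i < length lam \<and>
      sgn_par eps (part lam i) = -1 \<and> sgn_par eps (part lam (i + 1)) = -1 \<and>
      part lam (i - 1) \<noteq> part lam i \<and> part lam (i + 1) \<noteq> part lam (i + 2)}"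

definition bad_step :: "nat list \<Rightarrow> nat \<Rightarrow> bool" where
  "bad_step lam i \<longleftrightarrow>
     (i > 1 \<and> even (int (part lam (i - 1)) - int (part lam i))) \<or>
     even (int (part lam (i + 1)) - int (part lam (i + 2)))"

definition non_singular :: "int \<Rightarrow> nat list \<Rightarrow> bool" where
  "non_singular eps lam \<longleftrightarrow> (\<forall>i \<in> two_steps eps lam. \<not> bad_step lam i)"

definition ks_case1 :: "nat list \<Rightarrow> nat \<Rightarrow> bool" where
  "ks_case1 lam i \<longleftrightarrow> 1 \<le> i \<and> i \<le> length lam \<and> part lam i \<ge> part lam (i + 1) + 2"

definition ks_case2 :: "int \<Rightarrow> nat list \<Rightarrow> nat \<Rightarrow> bool" where
  "ks_case2 eps lam i \<longleftrightarrow> i \<in> two_steps eps lam \<and> part lam i = part lam (i + 1)"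

definition ks_admissible :: "int \<Rightarrow> nat list \<Rightarrow> nat \<Rightarrow> bool" where
  "ks_admissible eps lam i \<longleftrightarrow> ks_case1 lam i \<or> ks_case2 eps lam i"

text \<open>One step of the KS algorithm; positions are 1-based (list position j is part j+1);
  zero parts are discarded.  Outside Cases 1 and 2 the value is irrelevant.\<close>
definition ks_step :: "int \<Rightarrow> nat list \<Rightarrow> nat \<Rightarrow> nat list" where
  "ks_step eps lam i =
    (if ks_case1 lam i then
       filter (\<lambda>x. x > 0) (map (\<lambda>(j, x). if j + 1 \<le> i then x - 2 else x) (enumerate 0 lam))
     else if ks_case2 eps lam i then
       filter (\<lambda>x. x > 0) (map (\<lambda>(j, x). if j + 1 < i then x - 2
                                        else if j + 1 = i \<or> j + 1 = i + 1 then x - 1 else x)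
                                (enumerate 0 lam))
     else lam)"

fun ks_adm_seq :: "int \<Rightarrow> nat list \<Rightarrow> nat list \<Rightarrow> bool" where
  "ks_adm_seq eps lam [] = True"
| "ks_adm_seq eps lam (i # is) \<longleftrightarrow> ks_admissible eps lam i \<and> ks_adm_seq eps (ks_step eps lam i) is"

fun ks_seq :: "int \<Rightarrow> nat list \<Rightarrow> nat list \<Rightarrow> nat list" where
  "ks_seq eps lam [] = lam"
| "ks_seq eps lam (i # is) = ks_seq eps (ks_step eps lam i) is"

end

theory Submission
  imports Defs
begin

text \<open>Both cases of the Kempken--Spaltenstein step subtract from the parts a nonincreasing shift d:
  2 on the first i parts in Case 1; 2 before the 2-step (i, i+1) and 1 on it in Case 2.
  Where d is even it preserves the sign of a part and the parity of the gap between neighbours,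
  and as d is nonincreasing while the result stays sorted, equal neighbours stay equal; so every
  2-step of the lowered partition is a 2-step of lambda. The odd entries of d lie on a 2-step of
  lambda, where they flip the sign, so no 2-step of the result touches them; they can only flip a
  gap parity of a 2-step k with |k - i| = 2. But two 2-steps at distance 2 are both bad, which
  non-singularity of lambda rules out.\<close>

lemma part_Nil [simp]: "part [] j = 0"
  by (simp add: part_def)

lemma part_Cons: "part (x # xs) j = (if j = 0 then 0 else if j = 1 then x else part xs (j - 1))"
  by (cases j) (auto simp: part_def nth_Cons')

lemma part_map_enumerate:
  "part (map g (enumerate 0 xs)) j = (if 1 \<le> j \<and> j \<le> length xs then g (j - 1, xs ! (j - 1)) else 0)"
  by (auto simp: part_def nth_enumerate_eq)

lemma part_pos_iff: "\<forall>x\<in>set xs. 1 \<le> x \<Longrightarrow> 0 < part xs (Suc k) \<longleftrightarrow> k < length xs"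
  by (auto simp: part_def Suc_le_eq)

lemma part_filter_pos: "sorted_wrt (\<ge>) xs \<Longrightarrow> part (filter (\<lambda>x. 0 < x) xs) = part xs"
proof (induction xs)
  case (Cons x xs)
  show ?case
  proof (cases "0 < x")
    case False
    with Cons.prems have "\<forall>y\<in>set xs. y = 0" by auto
    then have "filter (\<lambda>x. 0 < x) xs = []" and "part xs = (\<lambda>_. 0)"
      by (auto simp: filter_empty_conv part_def fun_eq_iff)
    with False show ?thesis by (auto simp: part_Cons)
  qed (use Cons in \<open>auto simp: part_Cons\<close>)
qed simp

lemma part_antimono:
  assumes "sorted_wrt (\<ge>) xs" "1 \<le> a" "a \<le> b"
  shows "part xs b \<le> part xs a"
  using assms by (cases "a = b") (auto simp: part_def sorted_wrt_iff_nth_less)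

lemma sorted_wrt_ge_if_part_Suc_le:
  assumes "\<And>j. 1 \<le> j \<Longrightarrow> part xs (Suc j) \<le> part xs j"
  shows "sorted_wrt (\<ge>) xs"
proof -
  have "xs ! Suc i \<le> xs ! i" if "Suc i < length xs" for i
    using assms[of "Suc i"] that by (simp add: part_def)
  then show ?thesis
    by (simp add: sorted_wrt_iff_nth_Suc_transp transp_def)
qed

lemma mem_two_steps_iff:
  assumes "\<forall>x\<in>set lam. 1 \<le> x"
  shows "k \<in> two_steps eps lam \<longleftrightarrow> 1 \<le> k \<and> 0 < part lam (Suc k) \<and>
    sgn_par eps (part lam k) = -1 \<and> sgn_par eps (part lam (Suc k)) = -1 \<and>
    part lam (k - 1) \<noteq> part lam k \<and> part lam (Suc k) \<noteq> part lam (k + 2)"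
  using part_pos_iff[OF assms, of k] by (auto simp: two_steps_def)

lemma sgn_par_eq: "sgn_par eps m = (if even m then eps else - eps)"
  by (simp add: sgn_par_def)

lemma sgn_par_diff: "d \<le> m \<Longrightarrow> sgn_par eps (m - d) = (if even d then sgn_par eps m else - sgn_par eps m)"
  by (auto simp: sgn_par_eq even_diff_nat)

lemma even_diff_if_sgn_par: "sgn_par eps a = -1 \<Longrightarrow> sgn_par eps b = -1 \<Longrightarrow> even (int a - int b)"
  by (auto simp: sgn_par_eq split: if_splits)

lemma bad_steps_if_two_steps_two_apart:
  assumes "k \<in> two_steps eps lam" and "k + 2 \<in> two_steps eps lam"
  shows "bad_step lam k" and "bad_step lam (k + 2)"
proof -
  have "even (int (part lam (k + 1)) - int (part lam (k + 2)))"
    using assms by (intro even_diff_if_sgn_par[of eps]) (auto simp: two_steps_def)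
  then show "bad_step lam k" and "bad_step lam (k + 2)"
    using assms(1) by (auto simp: bad_step_def two_steps_def)
qed

(* Part j is list entry j - 1, hence d (Suc j); zero parts are discarded as in ks_step. *)
definition lower_parts :: "(nat \<Rightarrow> nat) \<Rightarrow> nat list \<Rightarrow> nat list" where
  "lower_parts d lam = filter (\<lambda>x. 0 < x) (map (\<lambda>(j, x). x - d (Suc j)) (enumerate 0 lam))"

lemma part_lower_parts:
  assumes "\<And>j. 1 \<le> j \<Longrightarrow> part lam (Suc j) - d (Suc j) \<le> part lam j - d j"
  shows "part (lower_parts d lam) j = part lam j - d j"
proof -
  let ?xs = "map (\<lambda>(j, x). x - d (Suc j)) (enumerate 0 lam)"
  have part_xs: "part ?xs = (\<lambda>j. part lam j - d j)"
    by (rule ext) (subst part_map_enumerate; simp add: part_def)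
  then have "sorted_wrt (\<ge>) ?xs"
    using assms by (intro sorted_wrt_ge_if_part_Suc_le) simp
  then show ?thesis
    by (simp add: lower_parts_def part_filter_pos part_xs)
qed

locale ks_lowering =
  fixes eps :: int and lam :: "nat list" and d :: "nat \<Rightarrow> nat"
  assumes parts_pos: "\<forall>x\<in>set lam. 1 \<le> x"
    and shift_Suc_le: "d (Suc j) \<le> d j"
    and shift_le_part: "1 \<le> j \<Longrightarrow> d j \<le> part lam j"
    and lowered_Suc_le: "1 \<le> j \<Longrightarrow> part lam (Suc j) - d (Suc j) \<le> part lam j - d j"
    and odd_shift: "odd (d j) \<Longrightarrow> \<exists>i\<in>two_steps eps lam. j \<in> {i, Suc i} \<and> odd (d i) \<and> odd (d (Suc i))"
begin

lemma part_lowered [simp]: "part (lower_parts d lam) j = part lam j - d j"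
  using lowered_Suc_le by (rule part_lower_parts)

lemma lowered_parts_pos: "\<forall>x\<in>set (lower_parts d lam). 1 \<le> x"
  by (auto simp: lower_parts_def)

lemma sorted_lowered: "sorted_wrt (\<ge>) (lower_parts d lam)"
  using lowered_Suc_le by (intro sorted_wrt_ge_if_part_Suc_le) simp

lemma even_shift_at_two_step:
  assumes "k \<in> two_steps eps (lower_parts d lam)" and "j \<in> {k, Suc k}"
  shows "even (d j)"
proof (rule ccontr)
  assume "odd (d j)"
  with odd_shift obtain i where "i \<in> two_steps eps lam" "j \<in> {i, Suc i}" by blast
  then have "sgn_par eps (part lam j) = -1"
    using mem_two_steps_iff[OF parts_pos] by auto
  moreover have "sgn_par eps (part lam j - d j) = -1" and "1 \<le> j"
    using assms mem_two_steps_iff[OF lowered_parts_pos] by auto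
  ultimately show False
    using \<open>odd (d j)\<close> shift_le_part sgn_par_diff by fastforce
qed

lemma lowered_eq_if_part_eq: "part lam j = part lam (Suc j) \<Longrightarrow> part lam j - d j = part lam (Suc j) - d (Suc j)"
  using lowered_Suc_le[of j] shift_Suc_le[of j] by (cases "j = 0") (auto simp: part_def)

lemma two_steps_lowered_subset: "two_steps eps (lower_parts d lam) \<subseteq> two_steps eps lam"
proof
  fix k assume k: "k \<in> two_steps eps (lower_parts d lam)"
  then have even: "even (d k)" "even (d (Suc k))"
    using even_shift_at_two_step by auto
  from k have "1 \<le> k" "0 < part lam (Suc k) - d (Suc k)"
    by (auto simp: mem_two_steps_iff[OF lowered_parts_pos])
  moreover from this have "0 < part lam k - d k"
    using lowered_Suc_le by (meson order.strict_trans2)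
  ultimately show "k \<in> two_steps eps lam"
    using k even shift_le_part lowered_eq_if_part_eq[of "k - 1"] lowered_eq_if_part_eq[of "Suc k"]
    by (auto simp: mem_two_steps_iff[OF parts_pos] mem_two_steps_iff[OF lowered_parts_pos] sgn_par_diff)
qed

lemma even_lowered_diff_iff:
  assumes "1 \<le> a" "1 \<le> b" "even (d a)" "even (d b)"
  shows "even (int (part lam a - d a) - int (part lam b - d b)) \<longleftrightarrow> even (int (part lam a) - int (part lam b))"
  using assms shift_le_part[of a] shift_le_part[of b] by (simp add: of_nat_diff)

lemma even_shift_near_two_step:
  assumes ns: "non_singular eps lam" and k: "k \<in> two_steps eps (lower_parts d lam)"
  shows "1 < k \<Longrightarrow> even (d (k - 1))" and "even (d (k + 2))"
proof -
  have k_lam: "k \<in> two_steps eps lam"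
    using k two_steps_lowered_subset by blast
  have even: "even (d k)" "even (d (Suc k))"
    using k even_shift_at_two_step by auto
  show "even (d (k - 1))" if "1 < k"
  proof (rule ccontr)
    assume "odd (d (k - 1))"
    with odd_shift obtain i where i: "i \<in> two_steps eps lam" "k - 1 \<in> {i, Suc i}" "odd (d (Suc i))"
      by blast
    with even \<open>1 < k\<close> have "k = i + 2" by auto
    with i k_lam have "bad_step lam i"
      by (metis bad_steps_if_two_steps_two_apart(1))
    with ns i show False by (auto simp: non_singular_def)
  qed
  show "even (d (k + 2))"
  proof (rule ccontr)
    assume "odd (d (k + 2))"
    with odd_shift obtain i where i: "i \<in> two_steps eps lam" "k + 2 \<in> {i, Suc i}" "odd (d i)"
      by blast
    with even have "i = k + 2" by auto
    with k_lam have "bad_step lam i"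
      using i(1) by (metis bad_steps_if_two_steps_two_apart(2))
    with ns i show False by (auto simp: non_singular_def)
  qed
qed

lemma non_singular_lowered:
  assumes ns: "non_singular eps lam"
  shows "non_singular eps (lower_parts d lam)"
  unfolding non_singular_def
proof
  fix k assume k: "k \<in> two_steps eps (lower_parts d lam)"
  then have "k \<in> two_steps eps lam" and "1 \<le> k"
    using two_steps_lowered_subset by (auto simp: two_steps_def)
  then have "\<not> bad_step lam k"
    using ns by (auto simp: non_singular_def)
  moreover have "even (d k)" "even (d (k + 1))"
    using k even_shift_at_two_step by auto
  moreover have "even (int (part lam (k - 1) - d (k - 1)) - int (part lam k - d k))
      \<longleftrightarrow> even (int (part lam (k - 1)) - int (part lam k))" if "1 < k"
    using that \<open>even (d k)\<close> even_shift_near_two_step(1)[OF ns k]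
    by (intro even_lowered_diff_iff) auto
  moreover have "even (int (part lam (k + 1) - d (k + 1)) - int (part lam (k + 2) - d (k + 2)))
      \<longleftrightarrow> even (int (part lam (k + 1)) - int (part lam (k + 2)))"
    using \<open>even (d (k + 1))\<close> even_shift_near_two_step(2)[OF ns k]
    by (intro even_lowered_diff_iff) auto
  ultimately show "\<not> bad_step (lower_parts d lam) k"
    unfolding bad_step_def part_lowered by blast
qed

end

lemma ks_lowering_case1:
  assumes sorted: "sorted_wrt (\<ge>) lam" and pos: "\<forall>x\<in>set lam. 1 \<le> x" and c1: "ks_case1 lam i"
  shows "ks_lowering eps lam (\<lambda>j. if j \<le> i then 2 else 0)"
proof
  from c1 have gap: "part lam (Suc i) + 2 \<le> part lam i"
    by (auto simp: ks_case1_def)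
  have anti: "1 \<le> a \<Longrightarrow> a \<le> b \<Longrightarrow> part lam b \<le> part lam a" for a b
    using part_antimono[OF sorted] .
  show "\<forall>x\<in>set lam. 1 \<le> x" by (rule pos)
  show "(if Suc j \<le> i then 2 else 0) \<le> (if j \<le> i then 2 else 0 :: nat)" for j
    by simp
  show "(if j \<le> i then 2 else 0) \<le> part lam j" if "1 \<le> j" for j
    using that anti[of j i] gap by auto
  show "part lam (Suc j) - (if Suc j \<le> i then 2 else 0) \<le> part lam j - (if j \<le> i then 2 else 0)"
    if "1 \<le> j" for j
    using that anti[of j "Suc j"] gap by (cases "j = i") auto
  show "\<exists>k\<in>two_steps eps lam. j \<in> {k, Suc k} \<and> odd (if k \<le> i then 2 else 0 :: nat)
      \<and> odd (if Suc k \<le> i then 2 else 0 :: nat)"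
    if "odd (if j \<le> i then 2 else 0 :: nat)" for j
    using that by (simp split: if_splits)
qed

lemma ks_lowering_case2:
  assumes sorted: "sorted_wrt (\<ge>) lam" and pos: "\<forall>x\<in>set lam. 1 \<le> x" and c2: "ks_case2 eps lam i"
  shows "ks_lowering eps lam (\<lambda>j. if j < i then 2 else if j \<le> Suc i then 1 else 0)"
proof
  from c2 have i: "i \<in> two_steps eps lam" and eq: "part lam i = part lam (Suc i)"
    by (auto simp: ks_case2_def)
  then have "0 < part lam (Suc i)"
    and gap_before: "part lam (i - 1) \<noteq> part lam i" and gap_after: "part lam (Suc i) \<noteq> part lam (i + 2)"
    by (auto simp: mem_two_steps_iff[OF pos])
  have anti: "1 \<le> a \<Longrightarrow> a \<le> b \<Longrightarrow> part lam b \<le> part lam a" for a b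
    using part_antimono[OF sorted] .
  have before: "part lam i < part lam j" if "1 \<le> j" "j < i" for j
    using that anti[of j "i - 1"] anti[of "i - 1" i] gap_before by fastforce
  show "\<forall>x\<in>set lam. 1 \<le> x" by (rule pos)
  show "(if Suc j < i then 2 else if Suc j \<le> Suc i then 1 else 0)
      \<le> (if j < i then 2 else if j \<le> Suc i then 1 else 0 :: nat)" for j
    by simp
  show "(if j < i then 2 else if j \<le> Suc i then 1 else 0) \<le> part lam j" if "1 \<le> j" for j
    using that before[of j] eq \<open>0 < part lam (Suc i)\<close> by (auto simp: le_Suc_eq)
  show "part lam (Suc j) - (if Suc j < i then 2 else if Suc j \<le> Suc i then 1 else 0)
      \<le> part lam j - (if j < i then 2 else if j \<le> Suc i then 1 else 0)" if "1 \<le> j" for j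
    using that anti[of j "Suc j"] before[of j] eq gap_after by (cases "Suc j = i") (auto simp: le_Suc_eq)
  show "\<exists>k\<in>two_steps eps lam. j \<in> {k, Suc k}
      \<and> odd (if k < i then 2 else if k \<le> Suc i then 1 else 0 :: nat)
      \<and> odd (if Suc k < i then 2 else if Suc k \<le> Suc i then 1 else 0 :: nat)"
    if "odd (if j < i then 2 else if j \<le> Suc i then 1 else 0 :: nat)" for j
    using that i by (intro bexI[of _ i]) (auto split: if_splits)
qed

lemma ks_step_case1: "ks_case1 lam i \<Longrightarrow> ks_step eps lam i = lower_parts (\<lambda>j. if j \<le> i then 2 else 0) lam"
  unfolding ks_step_def lower_parts_def by (auto intro!: arg_cong[where f = "filter _"])

lemma ks_step_case2:
  assumes "ks_case2 eps lam i"
  shows "ks_step eps lam i = lower_parts (\<lambda>j. if j < i then 2 else if j \<le> Suc i then 1 else 0) lam"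
proof -
  have "\<not> ks_case1 lam i"
    using assms by (auto simp: ks_case1_def ks_case2_def)
  with assms show ?thesis
    unfolding ks_step_def lower_parts_def by (auto intro!: arg_cong[where f = "filter _"])
qed

lemma ks_step_eq_lower_parts:
  assumes "sorted_wrt (\<ge>) lam" "\<forall>x\<in>set lam. 1 \<le> x" "ks_admissible eps lam i"
  obtains d where "ks_lowering eps lam d" "ks_step eps lam i = lower_parts d lam"
  using assms(3)
proof (unfold ks_admissible_def, elim disjE)
  assume "ks_case1 lam i"
  with assms(1,2) show thesis
    by (intro that[OF ks_lowering_case1 ks_step_case1])
next
  assume "ks_case2 eps lam i"
  with assms(1,2) show thesis
    by (intro that[OF ks_lowering_case2 ks_step_case2])
qed

lemma ks_seq_two_steps_non_singular:
  assumes "sorted_wrt (\<ge>) lam" "\<forall>x\<in>set lam. 1 \<le> x" "ks_adm_seq eps lam is"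
  shows "two_steps eps (ks_seq eps lam is) \<subseteq> two_steps eps lam
    \<and> (non_singular eps lam \<longrightarrow> non_singular eps (ks_seq eps lam is))"
  using assms
proof (induction "is" arbitrary: lam)
  case (Cons i "is")
  then obtain d where "ks_lowering eps lam d" and step: "ks_step eps lam i = lower_parts d lam"
    by (auto elim: ks_step_eq_lower_parts)
  interpret ks_lowering eps lam d by fact
  have "two_steps eps (ks_seq eps (lower_parts d lam) is) \<subseteq> two_steps eps (lower_parts d lam)
    \<and> (non_singular eps (lower_parts d lam) \<longrightarrow> non_singular eps (ks_seq eps (lower_parts d lam) is))"
    using Cons sorted_lowered lowered_parts_pos step by simp
  then show ?case
    using two_steps_lowered_subset non_singular_lowered step by auto
qed simp

theorem mainTheorem9:
  fixes eps :: int and N :: nat and lam :: "nat list" and "is" :: "nat list"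
  assumes "eps = 1 \<or> eps = -1"
    and "P_eps eps N lam"
    and "ks_adm_seq eps lam is"
  shows "two_steps eps (ks_seq eps lam is) \<subseteq> two_steps eps lam
         \<and> (non_singular eps lam \<longrightarrow> non_singular eps (ks_seq eps lam is))"
  using assms(2,3) ks_seq_two_steps_non_singular unfolding P_eps_def by blast

end
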